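(* Let $T(n)=(3n+1)/2^{v_2(3n+1)}$ be the Syracuse map. For odd $n$ let $L=L(n)=v_2(n+1)-1$, $r=r(n)=v_2(3T^{L}(n)+1)$, and $X(n)=(L+1)\log_2 3-(L+r)$. Consider the distribution of $X$ under natural density on odd starts (the probability law assigning to each value $x$ the natural density, among odd positive integers, of $\{n: X(n)=x\}$). Then: (1) its moment generating function is $$M_X(t)=\mathbb E[e^{tX}]=\frac{e^{t(\log_2 3-2)}}{4\bigl(1-\tfrac12 e^{t(\log_2 3-1)}\bigr)\bigl(1-\tfrac12 e^{-t}\bigr)}$$ for $-\ln 2<t<\ln 2/(\log_2 3-1)$; (2) $\mathbb E[X]=2\log_2 3-4\approx-0.8301$ and $\mathrm{Var}(X)=2\bigl((\log_2 3-1)^2+1\bigr)\approx 2.684$.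
   Context: $v_2$ is the $2$-adic valuation; $T^j$ the $j$-th iterate; $\ln$ is the natural logarithm. *)

theory Defs
  imports "HOL-Analysis.Analysis" "HOL-Computational_Algebra.Primes"
begin

definition v2 :: "nat \<Rightarrow> nat" where
  "v2 m = multiplicity (2::nat) m"

definition syr :: "nat \<Rightarrow> nat" where
  "syr n = (3 * n + 1) div 2 ^ v2 (3 * n + 1)"

definition Lc :: "nat \<Rightarrow> nat" where
  "Lc n = v2 (n + 1) - 1"

definition rc :: "nat \<Rightarrow> nat" where
  "rc n = v2 (3 * (syr ^^ Lc n) n + 1)"

definition Xc :: "nat \<Rightarrow> real" where
  "Xc n = real (Lc n + 1) * log 2 3 - real (Lc n + rc n)"

definition odd_ratio :: "(nat \<Rightarrow> bool) \<Rightarrow> nat \<Rightarrow> real" where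
  "odd_ratio P N = real (card {n. n < N \<and> odd n \<and> P n}) / real (card {n. n < N \<and> odd n})"

text \<open>Natural density among odd positive integers (meaningful when the limit exists).\<close>
definition odd_density :: "(nat \<Rightarrow> bool) \<Rightarrow> real" where
  "odd_density P = lim (odd_ratio P)"

end

theory Submission
  imports Defs "HOL-Number_Theory.Cong" "HOL-Real_Asymp.Real_Asymp"
begin

text \<open>
  For odd n put j = v2(n + 1) = L + 1. While 4 divides T^i(n) + 1 the Syracuse map halves only once,
  so 2^L (T^L(n) + 1) = 3^L (n + 1), and X(n) = j log2 3 - e with e = v2(3^j (n + 1) - 2^j) > j.
  The condition that n is odd with given (j, e) says exactly that 3^j (n + 1) = 2^j + 2^e modulo
  2^(e+1), a single residue class of n, of density 2^(-e) among odd numbers; as log2 3 is irrational,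
  distinct pairs give distinct values of X. Writing j = k + 1 and e = k + l + 2, the law of X is
  thus the image of two independent geometric laws P(k) = 2^(-(k+1)), P(l) = 2^(-(l+1)) under
  (k, l) \<mapsto> (k + 1)(log2 3 - 1) - (l + 1), and the moment generating function, mean and
  variance are products and linear combinations of geometric series.
\<close>

section \<open>The 2-adic valuation\<close>

lemma power2_dvd_iff_le_v2:
  assumes "0 < x"
  shows "2 ^ k dvd x \<longleftrightarrow> k \<le> v2 x"
  unfolding v2_def using assms by (intro power_dvd_iff_le_multiplicity) auto

lemma v2_eq_iff_mod:
  assumes "0 < x"
  shows "v2 x = k \<longleftrightarrow> x mod 2 ^ Suc k = 2 ^ k"
proof -
  have split: "x mod 2 ^ Suc k = 2 ^ k * (x div 2 ^ k mod 2) + x mod 2 ^ k"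
    by (subst power_Suc2) (rule mod_mult2_eq)
  have digit: "(r = 0 \<and> P * b + r \<noteq> 0) \<longleftrightarrow> P * b + r = P"
    if "r < P" "b < 2" for r b P :: nat
    using that by (cases b) auto
  have "v2 x = k \<longleftrightarrow> k \<le> v2 x \<and> \<not> Suc k \<le> v2 x"
    by arith
  also have "\<dots> \<longleftrightarrow> 2 ^ k dvd x \<and> \<not> 2 ^ Suc k dvd x"
    by (simp only: power2_dvd_iff_le_v2[OF assms])
  also have "\<dots> \<longleftrightarrow> x mod 2 ^ Suc k = 2 ^ k"
    unfolding dvd_eq_mod_eq_0 split by (rule digit) simp_all
  finally show ?thesis .
qed

lemma v2_power2_mult: "0 < x \<Longrightarrow> v2 (2 ^ k * x) = k + v2 x"
  unfolding v2_def by (simp add: prime_elem_multiplicity_mult_distrib)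

lemma v2_odd_mult: "odd y \<Longrightarrow> v2 (y * x) = v2 x"
  unfolding v2_def by (rule multiplicity_prime_elem_times_other) auto

lemma v2_power2 [simp]: "v2 (2 ^ k) = k"
  unfolding v2_def by (simp add: multiplicity_prime_power)

lemma v2_pos_if_even: "even x \<Longrightarrow> 0 < x \<Longrightarrow> 1 \<le> v2 x"
  using power2_dvd_iff_le_v2[of x 1] by simp

section \<open>The first Syracuse steps from an odd number\<close>

lemma funpow_syr_below_v2:
  assumes "i < v2 (n + 1)"
  shows "2 ^ i * ((syr ^^ i) n + 1) = 3 ^ i * (n + 1)"
  using assms
proof (induction i)
  case 0
  then show ?case by simp
next
  case (Suc i)
  define y where "y = (syr ^^ i) n"
  have IH: "2 ^ i * (y + 1) = 3 ^ i * (n + 1)"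
    using Suc by (simp add: y_def)
  have "2 ^ i * 4 dvd n + 1"
    using Suc.prems power2_dvd_iff_le_v2[of "n + 1" "i + 2"] by (simp add: power_add mult.commute)
  then have "2 ^ i * 4 dvd 3 ^ i * (n + 1)"
    by (rule dvd_mult)
  then have "2 ^ i * 4 dvd 2 ^ i * (y + 1)"
    by (simp only: IH)
  then have "4 dvd y + 1"
    by (metis nat_mult_dvd_cancel_disj power_not_zero zero_neq_numeral)
  then have "(3 * y + 1) mod 4 = 2"
    by presburger
  then have "v2 (3 * y + 1) = 1"
    using v2_eq_iff_mod[of "3 * y + 1" 1] by simp
  then have "2 * (syr y + 1) = 3 * (y + 1)"
    unfolding syr_def using \<open>4 dvd y + 1\<close> by simp presburger
  then have "2 ^ Suc i * (syr y + 1) = 3 * (2 ^ i * (y + 1))"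
    by (metis mult.assoc mult.left_commute power_Suc)
  also have "\<dots> = 3 ^ Suc i * (n + 1)"
    by (simp only: IH power_Suc mult.assoc)
  finally show ?case
    by (simp add: y_def)
qed

definition syr_steps :: "nat \<Rightarrow> nat" where
  "syr_steps n = v2 (n + 1)"

text \<open>For odd n this is L + r of the paper, computed without iterating T by means of
  2^L (T^L(n) + 1) = 3^L (n + 1).\<close>

definition syr_halvings :: "nat \<Rightarrow> nat" where
  "syr_halvings n = v2 (3 ^ syr_steps n * (n + 1) - 2 ^ syr_steps n)"

lemma Xc_eq_steps_halvings:
  assumes "odd n"
  shows "Xc n = real (syr_steps n) * log 2 3 - real (syr_halvings n)"
    and "1 \<le> syr_steps n" and "syr_steps n < syr_halvings n"
proof -
  define j where "j = syr_steps n"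
  obtain m where m: "n + 1 = 2 ^ j * m" and "odd m"
    using multiplicity_decompose'[of "n + 1" 2] unfolding j_def syr_steps_def v2_def by auto
  show "1 \<le> syr_steps n"
    using assms v2_pos_if_even[of "n + 1"] by (simp add: syr_steps_def)
  define L where "L = Lc n"
  then have L: "j = Suc L"
    using \<open>1 \<le> syr_steps n\<close> by (simp add: j_def Lc_def syr_steps_def)
  define y where "y = (syr ^^ L) n"
  have "2 ^ L * (y + 1) = 3 ^ L * (n + 1)"
    using funpow_syr_below_v2[of L n] L unfolding y_def j_def syr_steps_def by simp
  also have "\<dots> = 2 ^ L * (3 ^ L * 2 * m)"
    using m L by (simp add: ac_simps)
  finally have "2 ^ L * (y + 1) = 2 ^ L * (3 ^ L * 2 * m)" .
  then have y: "y + 1 = 3 ^ L * 2 * m"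
    by (simp only: mult_left_cancel power_not_zero zero_neq_numeral not_False_eq_True)
  define z where "z = 3 ^ j * m - 1"
  have "3 \<le> 3 ^ j * m"
  proof -
    have "(3::nat) \<le> 3 ^ j"
      using L by simp
    also have "\<dots> \<le> 3 ^ j * m"
      using odd_pos[OF \<open>odd m\<close>] by simp
    finally show ?thesis by simp
  qed
  then have "0 < z" "even z"
    using \<open>odd m\<close> by (auto simp: z_def)
  have "3 * y + 1 = 2 * z"
    using y L \<open>3 \<le> 3 ^ j * m\<close> by (simp add: z_def algebra_simps)
  then have rc: "rc n = 1 + v2 z"
    using v2_power2_mult[OF \<open>0 < z\<close>, of 1] by (simp add: rc_def y_def L_def)
  have "3 ^ j * (n + 1) - 2 ^ j = 2 ^ j * z"
    unfolding m z_def by (simp add: diff_mult_distrib2 ac_simps)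
  then have halvings: "syr_halvings n = j + v2 z"
    using v2_power2_mult[OF \<open>0 < z\<close>] by (simp add: syr_halvings_def j_def)
  show "Xc n = real (syr_steps n) * log 2 3 - real (syr_halvings n)"
    by (simp add: Xc_def rc halvings L flip: j_def L_def)
  show "syr_steps n < syr_halvings n"
    using v2_pos_if_even[OF \<open>even z\<close> \<open>0 < z\<close>] by (simp add: halvings j_def)
qed

lemma syr_steps_halvings_eq_iff_mod:
  assumes "1 \<le> j" "j < e"
  shows "syr_steps n = j \<and> syr_halvings n = e \<longleftrightarrow>
    3 ^ j * (n + 1) mod 2 ^ Suc e = 2 ^ j + 2 ^ e"
    (is "_ \<longleftrightarrow> ?X mod _ = _")
proof
  assume "syr_steps n = j \<and> syr_halvings n = e"
  then have "v2 (?X - 2 ^ j) = e"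
    by (auto simp: syr_halvings_def)
  moreover from this have "0 < ?X - 2 ^ j"
    using assms by (intro gr0I) (auto simp: v2_def)
  ultimately have "(?X - 2 ^ j) mod 2 ^ Suc e = 2 ^ e"
    by (simp add: v2_eq_iff_mod)
  then have "(?X - 2 ^ j + 2 ^ j) mod 2 ^ Suc e = (2 ^ e + 2 ^ j) mod 2 ^ Suc e"
    by (metis mod_add_left_eq)
  then show "?X mod 2 ^ Suc e = 2 ^ j + 2 ^ e"
    using \<open>0 < ?X - 2 ^ j\<close> assms by simp
next
  assume "?X mod 2 ^ Suc e = 2 ^ j + 2 ^ e"
  then obtain q where X: "?X = 2 ^ Suc e * q + 2 ^ j + 2 ^ e"
    by (metis add.assoc div_mult_mod_eq mult.commute)
  have "?X - 2 ^ j = 2 ^ Suc e * q + 2 ^ e"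
    using X by simp
  then have "v2 (?X - 2 ^ j) = e"
    using v2_eq_iff_mod[of "?X - 2 ^ j" e] by simp
  obtain d where e: "e = Suc j + d"
    using assms less_iff_Suc_add by auto
  have "?X = 2 ^ Suc j * (2 ^ Suc d * q + 2 ^ d) + 2 ^ j"
    unfolding X e by (simp add: power_add ac_simps distrib_left)
  then have "v2 ?X = j"
    using v2_eq_iff_mod[of ?X j] by simp
  moreover have "v2 ?X = syr_steps n"
    unfolding syr_steps_def by (rule v2_odd_mult) simp
  ultimately show "syr_steps n = j \<and> syr_halvings n = e"
    using \<open>v2 (?X - 2 ^ j) = e\<close> by (simp add: syr_halvings_def)
qed

lemma log2_3_lincomb_inj:
  assumes "real j * log 2 3 - real e = real j' * log 2 3 - real e'"
  shows "j = j' \<and> e = e'"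
proof -
  have pow: "2 powr (real i * log 2 3 - real d) = 3 ^ i / 2 ^ d" for i d :: nat
    by (simp add: powr_diff powr_realpow mult.commute[of "real i"] flip: powr_powr)
  have "(3::real) ^ j / 2 ^ e = 3 ^ j' / 2 ^ e'"
    using assms by (simp flip: pow)
  then have "real (3 ^ j * 2 ^ e') = real (3 ^ j' * 2 ^ e)"
    by (simp add: field_simps)
  then have eq: "(3::nat) ^ j * 2 ^ e' = 3 ^ j' * 2 ^ e"
    by (simp only: of_nat_eq_iff)
  then have "v2 (3 ^ j * 2 ^ e') = v2 (3 ^ j' * 2 ^ e)"
    by simp
  then have "e' = e"
    by (simp add: v2_odd_mult)
  with eq show ?thesis
    by simp
qed

lemma odd_Xc_eq_iff_mod:
  assumes "1 \<le> j" "j < e"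
  shows "odd n \<and> Xc n = real j * log 2 3 - real e \<longleftrightarrow>
    3 ^ j * (n + 1) mod 2 ^ Suc e = 2 ^ j + 2 ^ e"
proof
  assume "odd n \<and> Xc n = real j * log 2 3 - real e"
  then have "syr_steps n = j \<and> syr_halvings n = e"
    using Xc_eq_steps_halvings(1) log2_3_lincomb_inj by metis
  then show "3 ^ j * (n + 1) mod 2 ^ Suc e = 2 ^ j + 2 ^ e"
    using syr_steps_halvings_eq_iff_mod[OF assms] by blast
next
  assume "3 ^ j * (n + 1) mod 2 ^ Suc e = 2 ^ j + 2 ^ e"
  then have steps: "syr_steps n = j" "syr_halvings n = e"
    using syr_steps_halvings_eq_iff_mod[OF assms] by blast+
  then have "2 ^ 1 dvd n + 1"
    using assms(1) power2_dvd_iff_le_v2[of "n + 1" 1] by (simp add: syr_steps_def)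
  then have "odd n"
    by simp
  then show "odd n \<and> Xc n = real j * log 2 3 - real e"
    using Xc_eq_steps_halvings(1) steps by simp
qed

section \<open>Densities of residue classes\<close>

lemma coprime_affine_cong_residue_class:
  fixes a b M :: nat
  assumes "coprime a M" "0 < M"
  obtains c where "c < M" "\<And>n. [a * (n + 1) = b] (mod M) \<longleftrightarrow> n mod M = c"
proof -
  obtain x where x: "[a * x = 1] (mod M)"
    using cong_solve_coprime_nat[OF assms(1)] by auto
  define c where "c = (x * b + M - 1) mod M"
  have "[c + 1 = x * b + M - 1 + 1] (mod M)"
    by (simp add: c_def cong_def mod_Suc_eq)
  then have "[c + 1 = x * b] (mod M)"
    using assms(2) by (simp add: cong_def)
  have "[a * (n + 1) = b] (mod M) \<longleftrightarrow> n mod M = c" for n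
  proof -
    have "[a * (x * b) = 1 * b] (mod M)"
      using cong_mult[OF x cong_refl] by (simp add: mult.assoc)
    then have "[a * (n + 1) = b] (mod M) \<longleftrightarrow> [a * (n + 1) = a * (x * b)] (mod M)"
      by (simp add: cong_def)
    also have "\<dots> \<longleftrightarrow> [n + 1 = x * b] (mod M)"
      using assms(1) by (rule cong_mult_lcancel_nat)
    also have "\<dots> \<longleftrightarrow> [n + 1 = c + 1] (mod M)"
      using \<open>[c + 1 = x * b] (mod M)\<close> by (meson cong_sym cong_trans)
    also have "\<dots> \<longleftrightarrow> n mod M = c"
      unfolding cong_add_rcancel_nat by (simp add: cong_def c_def)
    finally show ?thesis .
  qed
  moreover have "c < M"
    using assms(2) by (simp add: c_def)
  ultimately show ?thesis
    using that by blast
qed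

lemma card_residue_class_approx:
  assumes "0 < M" "c < M"
  shows "\<bar>real (card {n. n < N \<and> n mod M = c}) - real N / real M\<bar> \<le> 1"
proof -
  define S where "S = {n. n < N \<and> n mod M = c}"
  have "card S \<le> card {..N div M}"
  proof (rule card_inj_on_le)
    show "inj_on (\<lambda>n. n div M) S"
      unfolding S_def inj_on_def by (metis (mono_tags) div_mult_mod_eq mem_Collect_eq)
    show "(\<lambda>n. n div M) ` S \<subseteq> {..N div M}"
      unfolding S_def by (auto intro: div_le_mono)
  qed simp
  then have upper: "real (card S) \<le> real (N div M) + 1"
    by simp
  have "card {..<N div M} \<le> card S"
  proof (rule card_inj_on_le)
    show "inj_on (\<lambda>q. q * M + c) {..<N div M}"
      using assms by (simp add: inj_on_def)
    have "q * M + c < N" if "q < N div M" for q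
    proof -
      have "q * M + c < Suc q * M"
        using assms by simp
      also have "\<dots> \<le> N div M * M"
        using that by (intro mult_le_mono1) simp
      finally show ?thesis
        by (meson div_times_less_eq_dividend order_less_le_trans)
    qed
    then show "(\<lambda>q. q * M + c) ` {..<N div M} \<subseteq> S"
      using assms by (auto simp: S_def)
  qed (simp add: S_def)
  then have lower: "real (N div M) \<le> real (card S)"
    by simp
  have "real N / real M = real (N div M) + real (N mod M) / real M"
    by (rule of_nat_of_nat_div_aux)
  moreover have "0 \<le> real (N mod M) / real M" "real (N mod M) / real M < 1"
    using assms by simp_all
  ultimately show ?thesis
    unfolding S_def[symmetric] using upper lower by linarith
qed

lemma LIMSEQ_divide_of_nat_if_bounded_error:
  fixes f :: "nat \<Rightarrow> real"
  assumes "\<And>N. \<bar>f N - real N * d\<bar> \<le> B"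
  shows "(\<lambda>N. f N / real N) \<longlonglongrightarrow> d"
proof (rule LIM_zero_cancel, rule Lim_null_comparison)
  show "\<forall>\<^sub>F N in sequentially. norm (f N / real N - d) \<le> B / real N"
    using eventually_gt_at_top[of 0]
  proof eventually_elim
    case (elim N)
    then have "f N / real N - d = (f N - real N * d) / real N"
      by (simp add: field_simps)
    then show ?case
      using assms[of N] by (simp add: abs_divide divide_right_mono)
  qed
  show "(\<lambda>N. B / real N) \<longlonglongrightarrow> 0"
    by real_asymp
qed

lemma odd_ratio_residue_class:
  assumes "0 < M" "c < M" "\<And>n. odd n \<and> P n \<longleftrightarrow> n mod M = c"
  shows "odd_ratio P \<longlonglongrightarrow> 2 / real M"
proof -
  have "{n. n < N \<and> odd n \<and> P n} = {n. n < N \<and> n mod M = c}" for N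
    using assms(3) by blast
  then have count_class: "(\<lambda>N. real (card {n. n < N \<and> odd n \<and> P n}) / real N) \<longlonglongrightarrow> 1 / real M"
    using card_residue_class_approx[OF assms(1,2)]
    by (intro LIMSEQ_divide_of_nat_if_bounded_error[where B = 1]) simp
  have "{n. n < N \<and> odd n} = {n::nat. n < N \<and> n mod 2 = 1}" for N
    by (auto simp: odd_iff_mod_2_eq_one)
  then have count_odd: "(\<lambda>N. real (card {n. n < N \<and> odd n}) / real N) \<longlonglongrightarrow> 1 / 2"
    using card_residue_class_approx[of 2 1]
    by (intro LIMSEQ_divide_of_nat_if_bounded_error[where B = 1]) simp
  have "(\<lambda>N. (real (card {n. n < N \<and> odd n \<and> P n}) / real N) /
      (real (card {n. n < N \<and> odd n}) / real N)) \<longlonglongrightarrow> (1 / real M) / (1 / 2)"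
    by (rule tendsto_divide[OF count_class count_odd]) simp
  moreover have "\<forall>\<^sub>F N in sequentially. (real (card {n. n < N \<and> odd n \<and> P n}) / real N) /
      (real (card {n. n < N \<and> odd n}) / real N) = odd_ratio P N"
    using eventually_gt_at_top[of 0] by eventually_elim (simp add: odd_ratio_def)
  ultimately show ?thesis
    by (simp add: Lim_transform_eventually)
qed

section \<open>The distribution of X\<close>

text \<open>The value of X when L = k and r = l + 2.\<close>

definition X_value :: "nat \<Rightarrow> nat \<Rightarrow> real" where
  "X_value k l = real (Suc k) * (log 2 3 - 1) - real (Suc l)"

lemma X_value_eq: "X_value k l = real (Suc k) * log 2 3 - real (k + l + 2)"
  by (simp add: X_value_def algebra_simps)

lemma inj_X_value: "inj (case_prod X_value)"
proof (rule injI, clarify)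
  fix k l k' l'
  assume "X_value k l = X_value k' l'"
  then have "Suc k = Suc k' \<and> k + l + 2 = k' + l' + 2"
    unfolding X_value_eq by (rule log2_3_lincomb_inj)
  then show "k = k' \<and> l = l'"
    by simp
qed

lemma Xc_eq_X_value_residue_class:
  obtains c where "c < 2 ^ (k + l + 3)"
    "\<And>n. odd n \<and> Xc n = X_value k l \<longleftrightarrow> n mod 2 ^ (k + l + 3) = c"
proof -
  have "(2::nat) ^ Suc k < 2 ^ (k + l + 2)"
    by (rule power_strict_increasing) auto
  then have "(2::nat) ^ Suc k + 2 ^ (k + l + 2) < 2 ^ (k + l + 2) + 2 ^ (k + l + 2)"
    by simp
  also have "\<dots> = 2 ^ (k + l + 3)"
    by (simp add: power_add)
  finally have "(2::nat) ^ Suc k + 2 ^ (k + l + 2) < 2 ^ (k + l + 3)" .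
  then have "odd n \<and> Xc n = X_value k l \<longleftrightarrow>
      [3 ^ Suc k * (n + 1) = 2 ^ Suc k + 2 ^ (k + l + 2)] (mod 2 ^ (k + l + 3))" for n
    using odd_Xc_eq_iff_mod[of "Suc k" "k + l + 2" n] by (simp add: X_value_eq cong_def numeral_3_eq_3)
  moreover obtain c :: nat where "c < 2 ^ (k + l + 3)" "\<And>n::nat.
      [3 ^ Suc k * (n + 1) = 2 ^ Suc k + 2 ^ (k + l + 2)] (mod 2 ^ (k + l + 3)) \<longleftrightarrow>
      n mod 2 ^ (k + l + 3) = c"
    by (rule coprime_affine_cong_residue_class[of "3 ^ Suc k" "2 ^ (k + l + 3)"]) auto
  ultimately show ?thesis
    using that by blast
qed

lemma image_Xc_odd: "Xc ` {n. odd n} = range (case_prod X_value)"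
proof (intro equalityI subsetI)
  fix x
  assume "x \<in> Xc ` {n. odd n}"
  then obtain n where "odd n" "x = Xc n"
    by auto
  then have "x = X_value (syr_steps n - 1) (syr_halvings n - syr_steps n - 1)"
    using Xc_eq_steps_halvings[OF \<open>odd n\<close>] by (simp add: X_value_eq of_nat_diff)
  then show "x \<in> range (case_prod X_value)"
    by auto
next
  fix x
  assume "x \<in> range (case_prod X_value)"
  then obtain k l where x: "x = X_value k l"
    by auto
  obtain c where "c < 2 ^ (k + l + 3)"
    "\<And>n. odd n \<and> Xc n = X_value k l \<longleftrightarrow> n mod 2 ^ (k + l + 3) = c"
    using Xc_eq_X_value_residue_class[of k l] by blast
  then have "odd c \<and> Xc c = X_value k l"
    by simp
  then show "x \<in> Xc ` {n. odd n}"
    using x by (auto intro!: image_eqI[where x = c])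
qed

lemma odd_ratio_Xc_X_value:
  "odd_ratio (\<lambda>n. Xc n = X_value k l) \<longlonglongrightarrow> (1 / 2) ^ Suc k * (1 / 2) ^ Suc l"
proof -
  obtain c where "c < 2 ^ (k + l + 3)"
    "\<And>n. odd n \<and> Xc n = X_value k l \<longleftrightarrow> n mod 2 ^ (k + l + 3) = c"
    using Xc_eq_X_value_residue_class[of k l] by blast
  then have "odd_ratio (\<lambda>n. Xc n = X_value k l) \<longlonglongrightarrow> 2 / real (2 ^ (k + l + 3))"
    by (intro odd_ratio_residue_class) auto
  moreover have "2 / real (2 ^ (k + l + 3)) = (1 / 2 :: real) ^ Suc k * (1 / 2) ^ Suc l"
    by (simp add: power_add power_one_over)
  ultimately show ?thesis
    by (simp only:)
qed

lemma odd_ratio_Xc_convergent: "convergent (odd_ratio (\<lambda>n. Xc n = x))"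
proof (cases "x \<in> Xc ` {n. odd n}")
  case True
  then obtain k l where "x = X_value k l"
    by (auto simp: image_Xc_odd)
  then show ?thesis
    using odd_ratio_Xc_X_value convergent_def by blast
next
  case False
  then have "{n. n < N \<and> odd n \<and> Xc n = x} = {}" for N
    by auto
  then have "odd_ratio (\<lambda>n. Xc n = x) = (\<lambda>N. 0)"
    unfolding odd_ratio_def by (simp only: card.empty of_nat_0 div_0)
  then show ?thesis
    by (simp add: convergent_const)
qed

lemma has_sum_odd_density_Xc:
  assumes "((\<lambda>(k, l). (1 / 2) ^ Suc k * (1 / 2) ^ Suc l * G (X_value k l)) has_sum S) UNIV"
  shows "((\<lambda>x. odd_density (\<lambda>n. Xc n = x) * G x) has_sum S) (Xc ` {n. odd n})"
proof -
  have "odd_density (\<lambda>n. Xc n = X_value k l) = (1 / 2) ^ Suc k * (1 / 2) ^ Suc l" for k l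
    unfolding odd_density_def by (rule limI[OF odd_ratio_Xc_X_value])
  then have "(\<lambda>x. odd_density (\<lambda>n. Xc n = x) * G x) \<circ> case_prod X_value =
      (\<lambda>(k, l). (1 / 2) ^ Suc k * (1 / 2) ^ Suc l * G (X_value k l))"
    by (simp add: fun_eq_iff)
  then have "(((\<lambda>x. odd_density (\<lambda>n. Xc n = x) * G x) \<circ> case_prod X_value) has_sum S) UNIV"
    using assms by simp
  then show ?thesis
    unfolding image_Xc_odd by (simp add: has_sum_reindex[OF inj_X_value])
qed

lemma has_sum_eqI:
  assumes "(f has_sum a) A" "\<And>x. x \<in> A \<Longrightarrow> g x = f x" "b = a"
  shows "(g has_sum b) A"
  using assms has_sum_cong by metis

lemma has_sum_product_real:
  fixes f g :: "_ \<Rightarrow> real"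
  assumes f: "(f has_sum a) A" and g: "(g has_sum b) B"
  shows "((\<lambda>(x, y). f x * g y) has_sum a * b) (A \<times> B)"
proof (rule has_sum_SigmaI)
  show "((\<lambda>y. (\<lambda>(x, y). f x * g y) (x, y)) has_sum f x * b) B" for x
    using has_sum_cmult_right[OF g] by simp
  show "((\<lambda>x. f x * b) has_sum a * b) A"
    using has_sum_cmult_left[OF f] .
  have "(\<lambda>x. norm (f x)) summable_on A" "(\<lambda>y. norm (g y)) summable_on B"
    using f g summable_on_iff_abs_summable_on_real[THEN iffD1] by (auto simp: summable_on_def)
  then have "(\<lambda>(x, y). norm (f x) * norm (g y)) summable_on A \<times> B"
    by (intro summable_on_SigmaI[where g = "\<lambda>x. norm (f x) * infsum (\<lambda>y. norm (g y)) B"])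
      (auto intro: has_sum_cmult_right summable_on_cmult_left)
  then show "(\<lambda>(x, y). f x * g y) summable_on A \<times> B"
    by (subst summable_on_iff_abs_summable_on_real) (simp add: case_prod_unfold abs_mult)
qed

lemma has_sum_power_Suc:
  fixes q :: real
  assumes "0 \<le> q" "q < 1"
  shows "((\<lambda>k. q ^ Suc k) has_sum q / (1 - q)) UNIV"
proof -
  have "(\<lambda>k. q * q ^ k) sums (q * (1 / (1 - q)))"
    using assms by (intro sums_mult geometric_sums) simp
  then show ?thesis
    using assms by (intro sums_nonneg_imp_has_sum) auto
qed

lemma has_sum_telescope_nonneg:
  fixes f G :: "nat \<Rightarrow> real"
  assumes "G \<longlonglongrightarrow> 0" "\<And>k. G k - G (Suc k) = f k" "\<And>k. 0 \<le> f k"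
  shows "(f has_sum G 0) UNIV"
  using telescope_sums'[OF assms(1)] assms(2,3) by (intro sums_nonneg_imp_has_sum) simp_all

lemma has_sum_half_power: "((\<lambda>k. (1 / 2) ^ Suc k) has_sum (1::real)) UNIV"
  using has_sum_power_Suc[of "1 / 2"] by simp

lemma has_sum_Suc_mult_half_power: "((\<lambda>k. real (Suc k) * (1 / 2) ^ Suc k) has_sum 2) UNIV"
proof -
  define G :: "nat \<Rightarrow> real" where "G k = (real k + 2) * (1 / 2) ^ k" for k
  have "G \<longlonglongrightarrow> 0"
    unfolding G_def by real_asymp
  moreover have "G k - G (Suc k) = real (Suc k) * (1 / 2) ^ Suc k" for k
    unfolding G_def by (simp add: field_simps)
  ultimately have "((\<lambda>k. real (Suc k) * (1 / 2) ^ Suc k) has_sum G 0) UNIV"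
    by (rule has_sum_telescope_nonneg) simp
  then show ?thesis
    by (simp add: G_def)
qed

lemma has_sum_centered_half_power: "((\<lambda>k. (real k - 1) * (1 / 2) ^ Suc k) has_sum 0) UNIV"
  by (rule has_sum_eqI[OF has_sum_add[OF has_sum_Suc_mult_half_power
        has_sum_cmult_right[OF has_sum_half_power, of "-2"]]]) (simp_all add: algebra_simps)

lemma has_sum_centered_sq_half_power: "((\<lambda>k. (real k - 1)\<^sup>2 * (1 / 2) ^ Suc k) has_sum 2) UNIV"
proof -
  define G :: "nat \<Rightarrow> real" where "G k = ((real k)\<^sup>2 + 2) * (1 / 2) ^ k" for k
  have "G \<longlonglongrightarrow> 0"
    unfolding G_def by real_asymp
  moreover have "G k - G (Suc k) = (real k - 1)\<^sup>2 * (1 / 2) ^ Suc k" for k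
    unfolding G_def by (simp add: field_simps power2_eq_square)
  ultimately have "((\<lambda>k. (real k - 1)\<^sup>2 * (1 / 2) ^ Suc k) has_sum G 0) UNIV"
    by (rule has_sum_telescope_nonneg) simp
  then show ?thesis
    by (simp add: G_def)
qed

section \<open>Moments of X\<close>

lemma has_sum_exp_X_value:
  fixes t :: real
  assumes "- ln 2 < t" "t < ln 2 / (log 2 3 - 1)"
  shows "((\<lambda>(k, l). (1 / 2) ^ Suc k * (1 / 2) ^ Suc l * exp (t * X_value k l)) has_sum
      exp (t * (log 2 3 - 2)) / (4 * (1 - exp (t * (log 2 3 - 1)) / 2) * (1 - exp (- t) / 2))) UNIV"
proof -
  define p q where "p = exp (t * (log 2 3 - 1)) / 2" and "q = exp (- t) / 2"
  have "(0::real) < log 2 3 - 1"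
    by (simp add: less_log_iff)
  then have "t * (log 2 3 - 1) < ln 2" "- t < ln 2"
    using assms by (simp_all add: pos_less_divide_eq)
  then have "exp (t * (log 2 3 - 1)) < 2" "exp (- t) < 2"
    by (metis exp_less_cancel_iff exp_ln zero_less_numeral)+
  then have "p < 1" "q < 1"
    by (simp_all add: p_def q_def)
  moreover have "0 \<le> p" "0 \<le> q"
    by (simp_all add: p_def q_def)
  ultimately have "((\<lambda>(k, l). p ^ Suc k * q ^ Suc l) has_sum p / (1 - p) * (q / (1 - q))) UNIV"
    unfolding UNIV_Times_UNIV[symmetric] by (intro has_sum_product_real has_sum_power_Suc)
  then show ?thesis
  proof (rule has_sum_eqI)
    fix x :: "nat \<times> nat"
    obtain k l where x: "x = (k, l)"
      by fastforce
    have "t * X_value k l = real (Suc k) * (t * (log 2 3 - 1)) + real (Suc l) * (- t)"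
      by (simp add: X_value_def algebra_simps)
    then have "exp (t * X_value k l) = (2 * p) ^ Suc k * (2 * q) ^ Suc l"
      by (simp only: exp_add exp_of_nat_mult) (simp add: p_def q_def)
    then have "(1 / 2) ^ Suc k * (1 / 2) ^ Suc l * exp (t * X_value k l) =
        (1 / 2) ^ Suc k * (2 * p) ^ Suc k * ((1 / 2) ^ Suc l * (2 * q) ^ Suc l)"
      by (simp only: ac_simps)
    also have "\<dots> = p ^ Suc k * q ^ Suc l"
      by (simp only: power_mult_distrib[symmetric]) simp
    finally show "(case x of (k, l) \<Rightarrow> (1 / 2) ^ Suc k * (1 / 2) ^ Suc l * exp (t * X_value k l)) =
        (case x of (k, l) \<Rightarrow> p ^ Suc k * q ^ Suc l)"
      by (simp add: x)
  next
    have exp_pq: "exp (t * (log 2 3 - 2)) = 4 * (p * q)"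
      by (simp add: p_def q_def flip: exp_add) (simp add: algebra_simps)
    show "exp (t * (log 2 3 - 2)) / (4 * (1 - exp (t * (log 2 3 - 1)) / 2) * (1 - exp (- t) / 2)) =
        p / (1 - p) * (q / (1 - q))"
      unfolding p_def[symmetric] q_def[symmetric] exp_pq
      by (simp only: mult.assoc times_divide_times_eq) (rule mult_divide_mult_cancel_left; simp)
  qed
qed

lemma has_sum_X_value:
  "((\<lambda>(k, l). (1 / 2) ^ Suc k * (1 / 2) ^ Suc l * X_value k l) has_sum 2 * log 2 3 - 4) UNIV"
proof -
  have Sk: "((\<lambda>(k, l). real (Suc k) * (1 / 2) ^ Suc k * (1 / 2) ^ Suc l) has_sum 2) UNIV"
    using has_sum_product_real[OF has_sum_Suc_mult_half_power has_sum_half_power] by simp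
  have Sl: "((\<lambda>(k, l). (1 / 2) ^ Suc k * (real (Suc l) * (1 / 2) ^ Suc l)) has_sum 2) UNIV"
    using has_sum_product_real[OF has_sum_half_power has_sum_Suc_mult_half_power] by simp
  from has_sum_add[OF has_sum_cmult_right[OF Sk, of "log 2 3 - 1"] has_sum_cmult_right[OF Sl, of "- 1"]]
  show ?thesis
    by (rule has_sum_eqI) (auto simp: X_value_def algebra_simps simp del: power_Suc)
qed

lemma has_sum_X_value_centered_sq:
  "((\<lambda>(k, l). (1 / 2) ^ Suc k * (1 / 2) ^ Suc l * (X_value k l - (2 * log 2 3 - 4))\<^sup>2)
      has_sum 2 * ((log 2 3 - 1)\<^sup>2 + 1)) UNIV"
proof -
  have Sk: "((\<lambda>(k, l). (real k - 1)\<^sup>2 * (1 / 2) ^ Suc k * (1 / 2) ^ Suc l) has_sum 2) UNIV"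
    using has_sum_product_real[OF has_sum_centered_sq_half_power has_sum_half_power] by simp
  have Sl: "((\<lambda>(k, l). (1 / 2) ^ Suc k * ((real l - 1)\<^sup>2 * (1 / 2) ^ Suc l)) has_sum 2) UNIV"
    using has_sum_product_real[OF has_sum_half_power has_sum_centered_sq_half_power] by simp
  have Skl: "((\<lambda>(k, l). (real k - 1) * (1 / 2) ^ Suc k * ((real l - 1) * (1 / 2) ^ Suc l))
      has_sum 0) UNIV"
    using has_sum_product_real[OF has_sum_centered_half_power has_sum_centered_half_power] by simp
  \<comment> \<open>X_value k l - (2 log2 3 - 4) = (log2 3 - 1)(k - 1) - (l - 1), whose cross term has sum 0.\<close>
  from has_sum_add[OF has_sum_add[OF has_sum_cmult_right[OF Sk, of "(log 2 3 - 1)\<^sup>2"] Sl]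
      has_sum_cmult_right[OF Skl, of "- 2 * (log 2 3 - 1)"]]
  show ?thesis
    by (rule has_sum_eqI) (auto simp: X_value_def algebra_simps power2_eq_square simp del: power_Suc)
qed

theorem mainTheorem14:
  defines "p \<equiv> (\<lambda>x. odd_density (\<lambda>n. Xc n = x))"
      and "V \<equiv> Xc ` {n. odd n}"
  shows "(\<forall>x. odd_ratio (\<lambda>n. Xc n = x) \<longlonglongrightarrow> p x)
    \<and> (\<forall>t::real. - ln 2 < t \<and> t < ln 2 / (log 2 3 - 1) \<longrightarrow>
         ((\<lambda>x. p x * exp (t * x)) has_sum
            (exp (t * (log 2 3 - 2)) /
              (4 * (1 - exp (t * (log 2 3 - 1)) / 2) * (1 - exp (- t) / 2)))) V)
    \<and> ((\<lambda>x. p x * x) has_sum (2 * log 2 3 - 4)) V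
    \<and> ((\<lambda>x. p x * (x - (2 * log 2 3 - 4))\<^sup>2) has_sum (2 * ((log 2 3 - 1)\<^sup>2 + 1))) V"
proof (intro conjI allI impI)
  show "odd_ratio (\<lambda>n. Xc n = x) \<longlonglongrightarrow> p x" for x
    using odd_ratio_Xc_convergent unfolding p_def odd_density_def by (simp add: convergent_LIMSEQ_iff)
  show "((\<lambda>x. p x * exp (t * x)) has_sum
      (exp (t * (log 2 3 - 2)) / (4 * (1 - exp (t * (log 2 3 - 1)) / 2) * (1 - exp (- t) / 2)))) V"
    if "- ln 2 < t \<and> t < ln 2 / (log 2 3 - 1)" for t
    using that unfolding p_def V_def
    by (intro has_sum_odd_density_Xc[where G = "\<lambda>x. exp (t * x)"] has_sum_exp_X_value) simp_all
  show "((\<lambda>x. p x * x) has_sum (2 * log 2 3 - 4)) V"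
    unfolding p_def V_def by (rule has_sum_odd_density_Xc[where G = "\<lambda>x. x", OF has_sum_X_value])
  show "((\<lambda>x. p x * (x - (2 * log 2 3 - 4))\<^sup>2) has_sum (2 * ((log 2 3 - 1)\<^sup>2 + 1))) V"
    unfolding p_def V_def
    by (rule has_sum_odd_density_Xc[where G = "\<lambda>x. (x - (2 * log 2 3 - 4))\<^sup>2",
          OF has_sum_X_value_centered_sq])
qed

end
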